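(* Let $n>p$ be positive integers, $N$ a real $n\times p$ matrix with $N_{ij}=0$ for $i<j$ and $N_{ii}>0$ for $i=1,\dots,p$, and $X$ a real $n\times p$ matrix with $X_{ij}=0$ for $i<j$. If $NX^{T}$ is skew-symmetric, then $X=0$. *)

theory Defs
  imports "HOL-Analysis.Analysis"
begin

end

theory Submission
  imports Defs
begin

(* Induction on the column index m. Once the columns of X before m vanish, the triangular
   shapes of N and X leave a single term in each relevant entry of N X^T: the (m, j) entry
   is N_mm X_jm and the (j, m) entry is N_jm X_mm. Skewness on the diagonal gives
   X_mm = 0, so the (j, m) entries vanish, and skewness again gives N_mm X_jm = 0. *)

lemma sum_eq_single:
  assumes "finite A" and "m \<in> A" and "\<And>k. k \<in> A \<Longrightarrow> k \<noteq> m \<Longrightarrow> f k = 0"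
  shows "sum f A = f m"
  using sum.mono_neutral_left[of A "{m}" f] assms by auto

lemma lower_triangular_skew_product_column_eq_zero:
  fixes N X :: "nat \<Rightarrow> nat \<Rightarrow> 'a::linordered_idom"
  assumes m: "m \<in> {1..p}" and "p \<le> n"
    and N_lower: "\<And>k. k \<in> {1..p} \<Longrightarrow> m < k \<Longrightarrow> N m k = 0"
    and N_diag: "N m m \<noteq> 0"
    and X_lower: "\<And>k. k \<in> {1..p} \<Longrightarrow> m < k \<Longrightarrow> X m k = 0"
    and earlier_columns: "\<And>j k. j \<in> {1..n} \<Longrightarrow> k \<in> {1..p} \<Longrightarrow> k < m \<Longrightarrow> X j k = 0"
    and skew: "\<And>i j. i \<in> {1..n} \<Longrightarrow> j \<in> {1..n} \<Longrightarrow>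
           (\<Sum>k=1..p. N i k * X j k) = - (\<Sum>k=1..p. N j k * X i k)"
    and j: "j \<in> {1..n}"
  shows "X j m = 0"
proof -
  have mn: "m \<in> {1..n}"
    using m \<open>p \<le> n\<close> by auto
  have row: "(\<Sum>k=1..p. N m k * X i k) = N m m * X i m" if "i \<in> {1..n}" for i
    by (rule sum_eq_single) (use m N_lower earlier_columns[OF that] in \<open>auto simp: nat_neq_iff\<close>)
  have column: "(\<Sum>k=1..p. N i k * X m k) = N i m * X m m" for i
    by (rule sum_eq_single) (use m X_lower earlier_columns[OF mn] in \<open>auto simp: nat_neq_iff\<close>)
  have "N m m * X m m = 0"
    using skew[OF mn mn] row[OF mn] by simp
  then have "X m m = 0"
    using N_diag by simp
  then have "N m m * X j m = 0"
    using skew[OF mn j] row[OF j] column[of j] by simp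
  then show ?thesis
    using N_diag by simp
qed

lemma lower_triangular_skew_product_eq_zero:
  fixes N X :: "nat \<Rightarrow> nat \<Rightarrow> 'a::linordered_idom"
  assumes "p \<le> n"
    and N_lower: "\<And>i j. i \<in> {1..n} \<Longrightarrow> j \<in> {1..p} \<Longrightarrow> i < j \<Longrightarrow> N i j = 0"
    and N_diag: "\<And>i. i \<in> {1..p} \<Longrightarrow> N i i \<noteq> 0"
    and X_lower: "\<And>i j. i \<in> {1..n} \<Longrightarrow> j \<in> {1..p} \<Longrightarrow> i < j \<Longrightarrow> X i j = 0"
    and skew: "\<And>i j. i \<in> {1..n} \<Longrightarrow> j \<in> {1..n} \<Longrightarrow>
           (\<Sum>k=1..p. N i k * X j k) = - (\<Sum>k=1..p. N j k * X i k)"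
    and "i \<in> {1..n}" and "m \<in> {1..p}"
  shows "X i m = 0"
  using \<open>m \<in> {1..p}\<close> \<open>i \<in> {1..n}\<close>
proof (induction m arbitrary: i rule: less_induct)
  case (less m)
  then have "m \<in> {1..n}"
    using \<open>p \<le> n\<close> by auto
  show ?case
    by (rule lower_triangular_skew_product_column_eq_zero[OF less.prems(1) \<open>p \<le> n\<close> _ _ _ _ skew less.prems(2)])
      (use \<open>m \<in> {1..n}\<close> less N_lower N_diag X_lower in auto)
qed

theorem mainTheorem2:
  fixes n p :: nat and N X :: "nat \<Rightarrow> nat \<Rightarrow> real"
  assumes "0 < p" and "p < n"
    and "\<And>i j. i \<in> {1..n} \<Longrightarrow> j \<in> {1..p} \<Longrightarrow> i < j \<Longrightarrow> N i j = 0"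
    and "\<And>i. i \<in> {1..p} \<Longrightarrow> N i i > 0"
    and "\<And>i j. i \<in> {1..n} \<Longrightarrow> j \<in> {1..p} \<Longrightarrow> i < j \<Longrightarrow> X i j = 0"
    and "\<And>i j. i \<in> {1..n} \<Longrightarrow> j \<in> {1..n} \<Longrightarrow>
           (\<Sum>k=1..p. N i k * X j k) = - (\<Sum>k=1..p. N j k * X i k)"
  shows "\<forall>i\<in>{1..n}. \<forall>j\<in>{1..p}. X i j = 0"
proof (intro ballI)
  fix i m
  assume "i \<in> {1..n}" and "m \<in> {1..p}"
  have "N k k \<noteq> 0" if "k \<in> {1..p}" for k
    using assms(4)[OF that] by simp
  with \<open>p < n\<close> show "X i m = 0"
    by (intro lower_triangular_skew_product_eq_zero[OF _ assms(3) _ assms(5,6)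
        \<open>i \<in> {1..n}\<close> \<open>m \<in> {1..p}\<close>]) simp_all
qed

end
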